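(* Let $(k_n)$ be a sequence of positive integers with $k_n\ll n$ (i.e. $k_n/n\to0$). Let $G_n$ be the Erdős–Rényi random graph on $\mathcal C^0_n$ with any edge probability $p_n\in(0,1)$, $R_n$ its associated reaction network, and let $A_n$ be the event that every reaction vector $y'-y$ of $R_n$ has exactly $4$ non-zero components. Then for all sufficiently large $n$, \[ \mathbb P(A_n\mid R_n\text{ is }k_n\text{-paired})\ge 1-\frac{21k_n}{n}. \]
   Context: Let $e_i$ be the $i$-th standard basis vector of $\mathbb Z^n$ and $\mathcal C^0_n=\{0\}\cup\{e_i:1\le i\le n\}\cup\{e_i+e_j:1\le i\le j\le n\}$, so $N_n=|\mathcal C^0_n|=\frac{n^2+3n+2}{2}$. $G_n$ is the Erdős–Rényi random graph on vertex set $\mathcal C^0_n$ in which each of the $\binom{N_n}{2}$ possible undirected edges is present independently with probability $p_n$. The associated reaction network $R_n$ has species $S_1,\dots,S_n$, complex set equal to the set of vertices of $G_n$ of positive degree, and for each edge $\{y,y'\}$ of $G_n$ the two reactions $y\to y'$ and $y'\to y$. A reaction network is paired if each connected component of its graph contains exactly two complexes, and $i$-paired if it is paired with exactly $i$ connected components; thus $R_n$ is $k$-paired exactly when $G_n$ is a matching with $k$ edges (plus isolated vertices). Conditioned on $R_n$ being $k_n$-paired, $G_n$ is uniformly distributed over all such matchings. *)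

theory Defs
  imports Complex_Main
begin

text \<open>Vectors of Z^n are represented as functions nat => int, with coordinates
  indexed by 1..n (all other coordinates are zero).\<close>

definition unitvec :: "nat \<Rightarrow> nat \<Rightarrow> int" where
  "unitvec i = (\<lambda>k. if k = i then 1 else 0)"

definition C0 :: "nat \<Rightarrow> (nat \<Rightarrow> int) set" where
  "C0 n = {\<lambda>_. 0} \<union> {unitvec i | i. 1 \<le> i \<and> i \<le> n}
        \<union> {(\<lambda>k. unitvec i k + unitvec j k) | i j. 1 \<le> i \<and> i \<le> j \<and> j \<le> n}"

definition possible_edges :: "nat \<Rightarrow> (nat \<Rightarrow> int) set set" where
  "possible_edges n = {{y, y'} | y y'. y \<in> C0 n \<and> y' \<in> C0 n \<and> y \<noteq> y'}"

text \<open>A graph G_n is given by its edge set E \<subseteq> possible_edges n. Erdos-Renyi probability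
  of a set S of graphs (edge sets), with edge probability p.\<close>
definition er_prob :: "nat \<Rightarrow> real \<Rightarrow> (nat \<Rightarrow> int) set set set \<Rightarrow> real" where
  "er_prob n p S = (\<Sum>E \<in> S \<inter> Pow (possible_edges n).
      p ^ card E * (1 - p) ^ (card (possible_edges n) - card E))"

definition er_cond_prob :: "nat \<Rightarrow> real \<Rightarrow> (nat \<Rightarrow> int) set set set
      \<Rightarrow> (nat \<Rightarrow> int) set set set \<Rightarrow> real" where
  "er_cond_prob n p A B = er_prob n p (A \<inter> B) / er_prob n p B"

text \<open>The reaction network of E is k-paired: every connected component contains exactly
  two complexes and there are exactly k components, i.e. E is a matching with k edges.\<close>
definition k_paired :: "nat \<Rightarrow> (nat \<Rightarrow> int) set set \<Rightarrow> bool" where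
  "k_paired k E \<longleftrightarrow> (\<forall>e1\<in>E. \<forall>e2\<in>E. e1 \<noteq> e2 \<longrightarrow> e1 \<inter> e2 = {}) \<and> card E = k"

definition all_reactions_four :: "(nat \<Rightarrow> int) set set \<Rightarrow> bool" where
  "all_reactions_four E \<longleftrightarrow>
     (\<forall>y y'. {y, y'} \<in> E \<and> y \<noteq> y' \<longrightarrow> card {i. y' i - y i \<noteq> 0} = 4)"

end

theory Submission
  imports Defs
begin

text \<open>
  Conditioned on being a matching with \<open>k\<close> edges, the Erd\<odiaeresis>s-R\<eacute>nyi graph is a uniformly random
  \<open>k\<close>-matching on \<open>C\<^sup>0\<^sub>n\<close>, and by symmetry every possible edge lies in the same fraction
  \<open>k / |edges|\<close> of the \<open>k\<close>-matchings. A union bound over the edges whose reaction vector does not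
  have exactly four non-zero entries therefore bounds the failure probability by \<open>k\<close> times the
  proportion of such edges. An edge is of this kind only if one endpoint is \<open>0\<close>, \<open>e\<^sub>i\<close> or \<open>2e\<^sub>i\<close>
  (\<open>2n + 1\<close> complexes) or both endpoints are of the form \<open>e\<^sub>a + e\<^sub>b\<close> and share an index
  (at most \<open>n\<^sup>3\<close> edges); since \<open>|C\<^sup>0\<^sub>n| \<ge> n(n - 1)/2\<close>, the proportion is at most \<open>21/n\<close> once \<open>n \<ge> 30\<close>.
\<close>

definition doubletons :: "'a set \<Rightarrow> 'a set set" where
  "doubletons V = {e. e \<subseteq> V \<and> card e = 2}"

definition matchings :: "'a set \<Rightarrow> nat \<Rightarrow> 'a set set set" where
  "matchings V k = {M. M \<subseteq> doubletons V \<and> pairwise disjnt M \<and> card M = k}"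

lemma finite_doubletons: "finite V \<Longrightarrow> finite (doubletons V)"
  unfolding doubletons_def by (rule finite_subset[of _ "Pow V"]) auto

lemma card_doubletons: "finite V \<Longrightarrow> card (doubletons V) = card V choose 2"
  unfolding doubletons_def by (rule n_subsets)

lemma finite_matchings: "finite V \<Longrightarrow> finite (matchings V k)"
  unfolding matchings_def by (rule finite_subset[of _ "Pow (doubletons V)"]) (auto simp: finite_doubletons)

lemma finite_matching: "finite V \<Longrightarrow> M \<in> matchings V k \<Longrightarrow> finite M"
  unfolding matchings_def by (metis (no_types) mem_Collect_eq finite_doubletons finite_subset)

lemma matchings_0: "finite V \<Longrightarrow> matchings V 0 = {{}}"
proof -
  assume "finite V"
  then have "M \<in> matchings V 0 \<longleftrightarrow> M = {}" for M
    using finite_matching[of V M 0] unfolding matchings_def by (auto simp only: mem_Collect_eq card_0_eq) auto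
  then show ?thesis by blast
qed

lemma doubletons_mono: "V \<subseteq> W \<Longrightarrow> doubletons V \<subseteq> doubletons W"
  unfolding doubletons_def by blast

lemma insert_in_matchings:
  assumes V: "finite V" and e: "e \<in> doubletons V" and M: "M \<in> matchings (V - e) k"
  shows "e \<notin> M" "insert e M \<in> matchings V (Suc k)"
proof -
  have sub: "M \<subseteq> doubletons (V - e)" and disj: "pairwise disjnt M" and "card M = k"
    using M by (simp_all add: matchings_def)
  have "e \<noteq> {}" using e by (auto simp: doubletons_def)
  have disj_e: "disjnt e x" if "x \<in> M" for x
    using sub that by (auto simp: doubletons_def disjnt_def)
  then show "e \<notin> M" using \<open>e \<noteq> {}\<close> by (auto simp: disjnt_def)
  moreover have "finite M" using finite_matching[OF _ M] V by simp
  ultimately have "card (insert e M) = Suc k" using \<open>card M = k\<close> by simp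
  moreover have "insert e M \<subseteq> doubletons V"
    using e sub doubletons_mono[of "V - e" V] by blast
  moreover have "pairwise disjnt (insert e M)"
    using disj disj_e by (simp add: pairwise_insert disjnt_sym)
  ultimately show "insert e M \<in> matchings V (Suc k)" by (simp add: matchings_def)
qed

lemma Diff_in_matchings:
  assumes V: "finite V" and M: "M \<in> matchings V (Suc k)" and e: "e \<in> M"
  shows "M - {e} \<in> matchings (V - e) k"
proof -
  have sub: "M \<subseteq> doubletons V" and disj: "pairwise disjnt M" and "card M = Suc k"
    using M by (simp_all add: matchings_def)
  have "x \<in> doubletons (V - e)" if "x \<in> M - {e}" for x
  proof -
    have "disjnt x e" using disj e that by (auto simp: pairwise_def)
    then show ?thesis using sub that by (auto simp: doubletons_def disjnt_def)
  qed
  moreover have "card (M - {e}) = k" using \<open>card M = Suc k\<close> e by simp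
  moreover have "pairwise disjnt (M - {e})" using disj by (rule pairwise_subset) blast
  ultimately show ?thesis by (simp add: matchings_def subset_iff)
qed

lemma matchings_nonempty:
  assumes "finite V" "2 * k \<le> card V"
  shows "matchings V k \<noteq> {}"
  using assms
proof (induction k arbitrary: V)
  case 0
  then show ?case using matchings_0 by blast
next
  case (Suc k)
  then have "2 \<le> card V" by simp
  then obtain e where e: "e \<subseteq> V" "card e = 2"
    by (rule obtain_subset_with_card_n)
  then have "finite e" "e \<in> doubletons V" by (simp_all add: card_ge_0_finite doubletons_def)
  then have "2 * k \<le> card (V - e)"
    using e Suc.prems by (simp add: card_Diff_subset)
  then obtain M where "M \<in> matchings (V - e) k"
    using Suc.IH Suc.prems(1) by blast
  then have "insert e M \<in> matchings V (Suc k)"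
    using insert_in_matchings(2) Suc.prems(1) \<open>e \<in> doubletons V\<close> by blast
  then show ?case by blast
qed

lemma card_matchings_containing:
  assumes V: "finite V" and e: "e \<in> doubletons V"
  shows "card {M \<in> matchings V (Suc k). e \<in> M} = card (matchings (V - e) k)"
proof -
  have "bij_betw (\<lambda>M. M - {e}) {M \<in> matchings V (Suc k). e \<in> M} (matchings (V - e) k)"
    by (rule bij_betw_byWitness[where f' = "insert e"])
      (use insert_in_matchings[OF V e] Diff_in_matchings[OF V] in auto)
  then show ?thesis by (rule bij_betw_same_card)
qed

lemma image_image_in_matchings:
  assumes f: "inj_on f V" and M: "M \<in> matchings V k"
  shows "image f ` M \<in> matchings (f ` V) k"
proof -
  have MV: "M \<subseteq> Pow V" using M by (auto simp: matchings_def doubletons_def)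
  have "inj_on (image f) M"
    using inj_on_subset[OF inj_on_image_Pow[OF f] MV] .
  then have "card (image f ` M) = k"
    using M by (simp add: card_image matchings_def)
  moreover have "image f ` M \<subseteq> doubletons (f ` V)"
    using M f by (auto simp: matchings_def doubletons_def card_image inj_on_subset)
  moreover have "pairwise disjnt (image f ` M)"
  proof (rule pairwise_imageI)
    fix x y assume "x \<in> M" "y \<in> M" "x \<noteq> y" "f ` x \<noteq> f ` y"
    then have "disjnt x y" "x \<subseteq> V" "y \<subseteq> V"
      using M MV by (auto simp: matchings_def pairwise_def)
    then show "disjnt (f ` x) (f ` y)"
      using f by (simp add: disjnt_def inj_on_image_Int[symmetric])
  qed
  ultimately show ?thesis by (simp add: matchings_def)
qed

lemma card_matchings_le:
  assumes "inj_on f V" "finite V"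
  shows "card (matchings V k) \<le> card (matchings (f ` V) k)"
proof (rule card_inj_on_le)
  have "matchings V k \<subseteq> Pow (Pow V)" by (auto simp: matchings_def doubletons_def)
  then show "inj_on (image (image f)) (matchings V k)"
    using inj_on_subset[OF inj_on_image_Pow[OF inj_on_image_Pow[OF assms(1)]]] by blast
qed (use assms in \<open>auto simp: image_image_in_matchings finite_matchings\<close>)

lemma card_matchings_eq:
  assumes "finite V" "finite W" "card V = card W"
  shows "card (matchings V k) = card (matchings W k)"
proof -
  obtain f where f: "bij_betw f V W" using finite_same_card_bij assms by blast
  then have "inv_into V f ` W = V" "f ` V = W" "inj_on (inv_into V f) W"
    by (auto simp: bij_betw_def bij_betw_inv_into inj_on_inv_into)
  then show ?thesis
    using card_matchings_le[of f V k] card_matchings_le[of "inv_into V f" W k] f assms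
    by (simp add: bij_betw_def)
qed

lemma sum_card_matchings_containing:
  assumes V: "finite V"
  shows "(\<Sum>e\<in>doubletons V. card {M \<in> matchings V k. e \<in> M}) = k * card (matchings V k)"
proof -
  have "(\<Sum>e\<in>doubletons V. card {M \<in> matchings V k. e \<in> M})
      = (\<Sum>e\<in>doubletons V. \<Sum>M\<in>matchings V k. if e \<in> M then 1 else 0)"
    using finite_matchings[OF V] by (simp add: sum.inter_filter[symmetric])
  also have "\<dots> = (\<Sum>M\<in>matchings V k. \<Sum>e\<in>doubletons V. if e \<in> M then 1 else 0)"
    by (rule sum.swap)
  also have "\<dots> = (\<Sum>M\<in>matchings V k. card {e \<in> doubletons V. e \<in> M})"
    using finite_doubletons[OF V] by (simp add: sum.inter_filter[symmetric])
  also have "\<dots> = (\<Sum>M\<in>matchings V k. k)"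
  proof (rule sum.cong)
    fix M assume "M \<in> matchings V k"
    then have "{e \<in> doubletons V. e \<in> M} = M" "card M = k" by (auto simp: matchings_def)
    then show "card {e \<in> doubletons V. e \<in> M} = k" by simp
  qed simp
  finally show ?thesis by simp
qed

lemma card_doubletons_mult_card_matchings_containing:
  assumes V: "finite V" and e: "e \<in> doubletons V"
  shows "card (doubletons V) * card {M \<in> matchings V k. e \<in> M} = k * card (matchings V k)"
proof (cases k)
  case 0
  then show ?thesis using matchings_0[OF V] by simp
next
  case (Suc j)
  define c where "c = card (matchings {..<card V - 2} j)"
  have c: "card {M \<in> matchings V k. e' \<in> M} = c" if e': "e' \<in> doubletons V" for e'
  proof -
    have "finite e'" "e' \<subseteq> V" "card e' = 2"
      using e' by (auto simp: doubletons_def card_ge_0_finite)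
    then have "card (V - e') = card {..<card V - 2}"
      using V by (simp add: card_Diff_subset)
    then show ?thesis
      using card_matchings_containing[OF V e'] card_matchings_eq[of "V - e'" "{..<card V - 2}" j] V
      by (simp add: Suc c_def)
  qed
  have "card (doubletons V) * c = k * card (matchings V k)"
    using sum_card_matchings_containing[OF V, of k] c by simp
  then show ?thesis using c[OF e] by simp
qed

lemma matchings_union_bound:
  assumes V: "finite V"
  shows "real (card (matchings V k))
           * (1 - real k * real (card {e \<in> doubletons V. \<not> P e}) / real (card (doubletons V)))
         \<le> real (card {M \<in> matchings V k. \<forall>e\<in>M. P e})"
proof -
  define m where "m = card (matchings V k)"
  define good where "good = {M \<in> matchings V k. \<forall>e\<in>M. P e}"
  define bad where "bad = {e \<in> doubletons V. \<not> P e}"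
  have "finite (matchings V k)" "finite bad"
    using V by (simp_all add: finite_matchings finite_doubletons bad_def)
  have per_edge: "real (card {M \<in> matchings V k. e \<in> M}) = real k * real m / real (card (doubletons V))"
    if "e \<in> doubletons V" for e
  proof -
    have "card (doubletons V) > 0"
      using that V finite_doubletons card_gt_0_iff by blast
    then show ?thesis
      using card_doubletons_mult_card_matchings_containing[OF V that, of k]
      by (simp add: m_def field_simps flip: of_nat_mult)
  qed
  have "matchings V k - good \<subseteq> (\<Union>e\<in>bad. {M \<in> matchings V k. e \<in> M})"
    by (auto simp: good_def bad_def matchings_def)
  then have "card (matchings V k - good) \<le> card (\<Union>e\<in>bad. {M \<in> matchings V k. e \<in> M})"
    using \<open>finite bad\<close> \<open>finite (matchings V k)\<close> by (intro card_mono) auto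
  also have "\<dots> \<le> (\<Sum>e\<in>bad. card {M \<in> matchings V k. e \<in> M})"
    using \<open>finite bad\<close> by (rule card_UN_le)
  finally have "real (card (matchings V k - good)) \<le> (\<Sum>e\<in>bad. real (card {M \<in> matchings V k. e \<in> M}))"
    by (simp flip: of_nat_sum)
  also have "\<dots> = real (card bad) * (real k * real m / real (card (doubletons V)))"
    using per_edge by (simp add: bad_def)
  finally have "real m - real (card good) \<le> real (card bad) * (real k * real m / real (card (doubletons V)))"
    using \<open>finite (matchings V k)\<close>
    by (simp add: m_def good_def card_Diff_subset card_mono of_nat_diff)
  then show ?thesis
    by (simp add: m_def good_def bad_def algebra_simps)
qed

lemma er_prob_of_card_eq:
  assumes "\<And>E. E \<in> S \<Longrightarrow> card E = K"
  shows "er_prob n p S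
    = real (card (S \<inter> Pow (possible_edges n))) * (p ^ K * (1 - p) ^ (card (possible_edges n) - K))"
  unfolding er_prob_def using assms by simp

lemma er_cond_prob_of_card_eq:
  assumes "0 < p" "p < 1" and "\<And>E. E \<in> B \<Longrightarrow> card E = K"
  shows "er_cond_prob n p A B
    = real (card (A \<inter> B \<inter> Pow (possible_edges n))) / real (card (B \<inter> Pow (possible_edges n)))"
proof -
  have "er_prob n p (A \<inter> B)
      = real (card (A \<inter> B \<inter> Pow (possible_edges n))) * (p ^ K * (1 - p) ^ (card (possible_edges n) - K))"
    using assms(3) by (intro er_prob_of_card_eq) blast
  moreover have "er_prob n p B
      = real (card (B \<inter> Pow (possible_edges n))) * (p ^ K * (1 - p) ^ (card (possible_edges n) - K))"
    using assms(3) by (rule er_prob_of_card_eq)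
  moreover have "p ^ K * (1 - p) ^ (card (possible_edges n) - K) \<noteq> 0" using assms(1,2) by simp
  ultimately show ?thesis
    unfolding er_cond_prob_def by simp
qed

definition unitsum :: "nat \<Rightarrow> nat \<Rightarrow> nat \<Rightarrow> int" where
  "unitsum i j = (\<lambda>k. unitvec i k + unitvec j k)"

definition one_species_complexes :: "nat \<Rightarrow> (nat \<Rightarrow> int) set" where
  "one_species_complexes n = insert (\<lambda>_. 0) (unitvec ` {1..n} \<union> (\<lambda>i. unitsum i i) ` {1..n})"

lemma unitsum_commute: "unitsum i j = unitsum j i"
  by (auto simp: unitsum_def)

lemma C0_eq_one_species_Un:
  "C0 n = one_species_complexes n \<union> {unitsum a b | a b. 1 \<le> a \<and> a < b \<and> b \<le> n}"
proof
  show "C0 n \<subseteq> one_species_complexes n \<union> {unitsum a b | a b. 1 \<le> a \<and> a < b \<and> b \<le> n}"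
  proof
    fix y assume "y \<in> C0 n"
    then consider "y = (\<lambda>_. 0)" | i where "1 \<le> i" "i \<le> n" "y = unitvec i"
      | i j where "1 \<le> i" "i \<le> j" "j \<le> n" "y = unitsum i j"
      unfolding C0_def unitsum_def by blast
    then show "y \<in> one_species_complexes n \<union> {unitsum a b | a b. 1 \<le> a \<and> a < b \<and> b \<le> n}"
    proof cases
      case (3 i j)
      then have "i = j \<or> i < j" by auto
      then show ?thesis
        using 3 by (auto simp: one_species_complexes_def)
    qed (auto simp: one_species_complexes_def)
  qed
  have "unitsum i j \<in> C0 n" if "1 \<le> i" "i \<le> j" "j \<le> n" for i j
    using that unfolding C0_def unitsum_def by blast
  moreover have "unitvec i \<in> C0 n" if "1 \<le> i" "i \<le> n" for i
    using that unfolding C0_def by blast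
  moreover have "(\<lambda>_. 0) \<in> C0 n" unfolding C0_def by blast
  ultimately show "one_species_complexes n \<union> {unitsum a b | a b. 1 \<le> a \<and> a < b \<and> b \<le> n} \<subseteq> C0 n"
    unfolding one_species_complexes_def by fastforce
qed

lemma finite_C0: "finite (C0 n)"
proof -
  have "{unitsum a b | a b. 1 \<le> a \<and> a < b \<and> b \<le> n} \<subseteq> (\<lambda>(i, j). unitsum i j) ` ({1..n} \<times> {1..n})"
    by auto
  then have "finite {unitsum a b | a b. 1 \<le> a \<and> a < b \<and> b \<le> n}"
    by (rule finite_subset) simp
  then show ?thesis
    unfolding C0_eq_one_species_Un by (simp add: one_species_complexes_def)
qed

lemma card_one_species_complexes_le: "card (one_species_complexes n) \<le> 2 * n + 1"
proof -
  have "card (one_species_complexes n) \<le> Suc (card (unitvec ` {1..n} \<union> (\<lambda>i. unitsum i i) ` {1..n}))"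
    unfolding one_species_complexes_def by (rule card_insert_le_m1) auto
  also have "\<dots> \<le> Suc (card (unitvec ` {1..n}) + card ((\<lambda>i. unitsum i i) ` {1..n}))"
    using card_Un_le by simp
  also have "\<dots> \<le> 2 * n + 1"
    using card_image_le[of "{1..n}" unitvec] card_image_le[of "{1..n}" "\<lambda>i. unitsum i i"] by simp
  finally show ?thesis .
qed

lemma possible_edges_eq_doubletons: "possible_edges n = doubletons (C0 n)"
  unfolding possible_edges_def doubletons_def by (auto simp: card_2_iff)

lemma binomial_le_card_C0: "n choose 2 \<le> card (C0 n)"
proof -
  define ind :: "nat set \<Rightarrow> nat \<Rightarrow> int" where "ind S = (\<lambda>k. if k \<in> S then 1 else 0)" for S
  have "inj_on ind {S. S \<subseteq> {1..n} \<and> card S = 2}"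
    by (rule inj_onI) (auto simp: ind_def fun_eq_iff split: if_splits)
  moreover have "ind ` {S. S \<subseteq> {1..n} \<and> card S = 2} \<subseteq> C0 n"
  proof
    fix z assume "z \<in> ind ` {S. S \<subseteq> {1..n} \<and> card S = 2}"
    then obtain S where S: "S \<subseteq> {1..n}" "card S = 2" "z = ind S" by auto
    then obtain i j where ij: "S = {i, j}" "i < j"
      by (metis card_2_iff insert_commute linorder_neqE_nat)
    then have "z = unitsum i j" "1 \<le> i" "j \<le> n"
      using S by (auto simp: ind_def unitsum_def unitvec_def)
    then show "z \<in> C0 n" using ij by (auto simp: C0_eq_one_species_Un)
  qed
  ultimately have "card {S. S \<subseteq> {1..n} \<and> card S = 2} \<le> card (C0 n)"
    using finite_C0 by (rule card_inj_on_le)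
  then show ?thesis by (simp add: n_subsets)
qed

definition four_species_reaction :: "(nat \<Rightarrow> int) set \<Rightarrow> bool" where
  "four_species_reaction e \<longleftrightarrow> (\<forall>y y'. {y, y'} = e \<and> y \<noteq> y' \<longrightarrow> card {i. y' i - y i \<noteq> 0} = 4)"

lemma all_reactions_four_iff: "all_reactions_four E \<longleftrightarrow> (\<forall>e\<in>E. four_species_reaction e)"
  unfolding all_reactions_four_def four_species_reaction_def by blast

lemma card_support_unitsum_diff:
  assumes "a \<noteq> b" "a \<noteq> c" "a \<noteq> d" "b \<noteq> c" "b \<noteq> d" "c \<noteq> d"
  shows "card {i. unitsum c d i - unitsum a b i \<noteq> 0} = 4"
proof -
  have "{i. unitsum c d i - unitsum a b i \<noteq> 0} = {a, b, c, d}"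
    using assms by (auto simp: unitsum_def unitvec_def)
  then show ?thesis using assms by simp
qed

lemma non_four_species_reactions_subset:
  "{e \<in> doubletons (C0 n). \<not> four_species_reaction e}
     \<subseteq> (\<lambda>(u, v). {u, v}) ` (one_species_complexes n \<times> C0 n)
       \<union> (\<lambda>(i, j, l). {unitsum i j, unitsum i l}) ` ({1..n} \<times> {1..n} \<times> {1..n})"
    (is "_ \<subseteq> ?B1 \<union> ?B2")
proof
  fix e assume "e \<in> {e \<in> doubletons (C0 n). \<not> four_species_reaction e}"
  then obtain y y' where e: "e = {y, y'}" "y \<noteq> y'" "y \<in> C0 n" "y' \<in> C0 n"
    and bad: "\<not> four_species_reaction e"
    by (auto simp: doubletons_def card_2_iff)
  show "e \<in> ?B1 \<union> ?B2"
  proof (cases "y \<in> one_species_complexes n \<or> y' \<in> one_species_complexes n")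
    case True
    moreover have "e = {y', y}" using e by auto
    ultimately have "e \<in> ?B1" using e by blast
    then show ?thesis by simp
  next
    case False
    then obtain a b c d where ab: "1 \<le> a" "a < b" "b \<le> n" "y = unitsum a b"
      and cd: "1 \<le> c" "c < d" "d \<le> n" "y' = unitsum c d"
      using e by (auto simp: C0_eq_one_species_Un)
    have "a = c \<or> a = d \<or> b = c \<or> b = d"
    proof (rule ccontr)
      assume "\<not> ?thesis"
      then have "four_species_reaction e"
        unfolding four_species_reaction_def e doubleton_eq_iff
        using card_support_unitsum_diff[of a b c d] card_support_unitsum_diff[of c d a b] ab cd
        by auto
      then show False using bad by contradiction
    qed
    moreover have "a = c \<Longrightarrow> e = {unitsum a b, unitsum a d}" "a = d \<Longrightarrow> e = {unitsum a b, unitsum a c}"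
      "b = c \<Longrightarrow> e = {unitsum b a, unitsum b d}" "b = d \<Longrightarrow> e = {unitsum b a, unitsum b c}"
      using e ab cd unitsum_commute by metis+
    ultimately have "e \<in> ?B2" using ab cd
      by (elim disjE) (force intro!: image_eqI)+
    then show ?thesis by simp
  qed
qed

lemma card_non_four_species_reactions_le:
  "card {e \<in> doubletons (C0 n). \<not> four_species_reaction e} \<le> (2 * n + 1) * card (C0 n) + n ^ 3"
proof -
  have "card {e \<in> doubletons (C0 n). \<not> four_species_reaction e}
      \<le> card ((\<lambda>(u, v). {u, v}) ` (one_species_complexes n \<times> C0 n))
        + card ((\<lambda>(i, j, l). {unitsum i j, unitsum i l}) ` ({1..n} \<times> {1..n} \<times> {1..n}))"
    by (rule order_trans[OF card_mono[OF _ non_four_species_reactions_subset] card_Un_le])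
      (simp add: finite_C0 one_species_complexes_def)
  also have "\<dots> \<le> card (one_species_complexes n \<times> C0 n) + card ({1..n} \<times> {1..n} \<times> {1..n})"
    by (intro add_mono card_image_le) (simp_all add: finite_C0 one_species_complexes_def)
  also have "\<dots> \<le> (2 * n + 1) * card (C0 n) + n ^ 3"
    using mult_right_mono[OF card_one_species_complexes_le[of n], of "card (C0 n)"]
    by (simp add: card_cartesian_product power3_eq_cube)
  finally show ?thesis .
qed

lemma real_choose_two: "real (N choose 2) = real N * (real N - 1) / 2"
proof -
  have "even (N * (N - 1))" by (cases "even N") auto
  then have "real (N choose 2) = real (N * (N - 1)) / 2"
    by (simp add: choose_two real_of_nat_div)
  then show ?thesis by (cases N) (auto simp: algebra_simps)
qed

lemma quartic_le_21_choose_two: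
  fixes x y :: real
  assumes x: "30 \<le> x" and y: "x * (x - 1) \<le> 2 * y"
  shows "x * ((2 * x + 1) * y + x ^ 3) \<le> 21 * (y * (y - 1) / 2)"
proof -
  have y0: "(x^2 - x) / 2 \<le> y" using y by (simp add: power2_eq_square algebra_simps)
  have "30 * x \<le> x^2" using x by (simp add: power2_eq_square)
  then have q: "6 * x^2 \<le> 21 * y - 21 - 4 * x^2 - 2 * x" using x y0 by simp
  have "0 \<le> (x^2 - x) / 2" using x by (simp add: power2_eq_square)
  then have "((x^2 - x) / 2) * (6 * x^2) \<le> y * (21 * y - 21 - 4 * x^2 - 2 * x)"
    using q y0 by (intro mult_mono) auto
  moreover have "2 * x^4 \<le> ((x^2 - x) / 2) * (6 * x^2)"
  proof -
    have "3 * x \<le> x * x" using x by simp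
    then have "x * x * (3 * x) \<le> x * x * (x * x)" using x by (intro mult_left_mono) auto
    then show ?thesis by (simp add: power2_eq_square power4_eq_xxxx algebra_simps)
  qed
  ultimately have "2 * x^4 \<le> y * (21 * y - 21 - 4 * x^2 - 2 * x)" by linarith
  then show ?thesis by (simp add: field_simps power2_eq_square power3_eq_cube power4_eq_xxxx)
qed

lemma non_four_species_reactions_fraction:
  assumes n: "30 \<le> n"
  shows "real (card {e \<in> doubletons (C0 n). \<not> four_species_reaction e}) / real (card (doubletons (C0 n)))
           \<le> 21 / real n"
proof -
  define N where "N = card (C0 n)"
  have "real (card {e \<in> doubletons (C0 n). \<not> four_species_reaction e})
      \<le> real ((2 * n + 1) * N + n ^ 3)"
    using card_non_four_species_reactions_le[of n] unfolding N_def by (rule of_nat_mono)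
  then have "real n * real (card {e \<in> doubletons (C0 n). \<not> four_species_reaction e})
      \<le> real n * ((2 * real n + 1) * real N + real n ^ 3)"
    by (intro mult_left_mono) (auto simp: algebra_simps)
  also have "\<dots> \<le> 21 * (real N * (real N - 1) / 2)"
  proof (rule quartic_le_21_choose_two)
    have "real (n choose 2) \<le> real N"
      using binomial_le_card_C0[of n] by (simp add: N_def)
    then show "real n * (real n - 1) \<le> 2 * real N"
      by (simp add: real_choose_two)
  qed (use n in simp)
  also have "\<dots> = 21 * real (card (doubletons (C0 n)))"
    by (simp add: card_doubletons finite_C0 real_choose_two N_def)
  finally have *: "real (card {e \<in> doubletons (C0 n). \<not> four_species_reaction e})
      \<le> 21 / real n * real (card (doubletons (C0 n)))"
    using n by (simp add: field_simps)
  show ?thesis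
    by (cases "card (doubletons (C0 n)) = 0") (use * in \<open>simp_all add: pos_divide_le_eq\<close>)
qed

lemma er_cond_prob_k_paired_eq:
  assumes "0 < p" "p < 1"
  shows "er_cond_prob n p {E. all_reactions_four E} {E. k_paired K E}
    = real (card {M \<in> matchings (C0 n) K. \<forall>e\<in>M. four_species_reaction e})
        / real (card (matchings (C0 n) K))"
proof -
  have paired: "{E. k_paired K E} \<inter> Pow (possible_edges n) = matchings (C0 n) K"
    unfolding k_paired_def matchings_def possible_edges_eq_doubletons pairwise_def disjnt_def
    by blast
  then have "{E. all_reactions_four E} \<inter> {E. k_paired K E} \<inter> Pow (possible_edges n)
      = {M \<in> matchings (C0 n) K. \<forall>e\<in>M. four_species_reaction e}"
    unfolding all_reactions_four_iff by blast
  then show ?thesis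
    using er_cond_prob_of_card_eq[OF assms, of "{E. k_paired K E}" K] paired
    by (simp add: k_paired_def)
qed

lemma er_cond_prob_four_species_ge:
  assumes n: "30 \<le> n" and p: "0 < p" "p < 1"
  shows "1 - 21 * real K / real n \<le> er_cond_prob n p {E. all_reactions_four E} {E. k_paired K E}"
proof (cases "n \<le> 21 * K")
  case True
  then have "1 - 21 * real K / real n \<le> 0"
    using n by (simp add: field_simps flip: of_nat_mult)
  then show ?thesis
    unfolding er_cond_prob_k_paired_eq[OF p] by (rule order_trans) simp
next
  case False
  define bad where "bad = {e \<in> doubletons (C0 n). \<not> four_species_reaction e}"
  have "real n \<le> real (n choose 2)"
    using n by (simp add: real_choose_two field_simps)
  then have "2 * K \<le> card (C0 n)"
    using False binomial_le_card_C0[of n] by simp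
  then have m: "real (card (matchings (C0 n) K)) > 0"
    using matchings_nonempty[of "C0 n" K] finite_matchings[of "C0 n" K] finite_C0
    by (simp add: card_gt_0_iff)
  have "real K * (real (card bad) / real (card (doubletons (C0 n)))) \<le> real K * (21 / real n)"
    using non_four_species_reactions_fraction[OF n] by (intro mult_left_mono) (simp_all add: bad_def)
  then have "1 - 21 * real K / real n \<le> 1 - real K * real (card bad) / real (card (doubletons (C0 n)))"
    by (simp add: mult.commute)
  also have "\<dots> \<le> real (card {M \<in> matchings (C0 n) K. \<forall>e\<in>M. four_species_reaction e})
      / real (card (matchings (C0 n) K))"
    using matchings_union_bound[of "C0 n" K four_species_reaction] m
    by (simp add: pos_le_divide_eq mult.commute finite_C0 bad_def)
  finally show ?thesis by (simp add: er_cond_prob_k_paired_eq[OF p])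
qed

text \<open>The estimate holds for every \<open>n \<ge> 30\<close> and every \<open>k\<^sub>n\<close>.\<close>

theorem mainTheorem8:
  fixes k :: "nat \<Rightarrow> nat" and p :: "nat \<Rightarrow> real"
  assumes "\<forall>n. k n > 0"
    and "(\<lambda>n. real (k n) / real n) \<longlonglongrightarrow> 0"
    and "\<forall>n. 0 < p n \<and> p n < 1"
  shows "\<forall>\<^sub>F n in sequentially.
     er_cond_prob n (p n) {E. all_reactions_four E} {E. k_paired (k n) E}
       \<ge> 1 - 21 * real (k n) / real n"
proof (rule eventually_sequentiallyI[of 30])
  fix n :: nat
  assume "30 \<le> n"
  then show "er_cond_prob n (p n) {E. all_reactions_four E} {E. k_paired (k n) E}
      \<ge> 1 - 21 * real (k n) / real n"
    using er_cond_prob_four_species_ge assms(3) by blast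
qed

end
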